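(* Fix constants $\alpha>0$, $\beta>0$, $\gamma_P>2$ and $0<\epsilon<\epsilon_s$, and suppose $$\eta:=\max\{1+(\epsilon-\epsilon_s)/2,\ \epsilon_s\}<1.$$ Let $f_\eta(n):=n^\eta$, $s:=\min\{\lceil\alpha n^{\epsilon_s}\rceil,n-1\}$ and $g:=(\beta s n^{\epsilon})^{1/2}$, and suppose $s<n-1$. Let $c_{nk}$ be the number of comparisons made by the nonrecursive SELECT on an input list of size $n$ with rank $k$, and set $$\hat\gamma_P:=(4\gamma_P+2)(\beta/\alpha)^{1/2}+(2\gamma_P-1)\big[\alpha+1/f_\eta(n)\big].$$ Then $$\mathrm{P}\big[c_{nk}\le n+\min\{k,n-k\}+\hat\gamma_P f_\eta(n)\big]\ge1-4e^{-2\beta n^{\epsilon}}.$$ Moreover, if $n^{1-\eta}e^{-2\beta n^{\epsilon}}\le1$, then $$\mathrm{E}\,c_{nk}\le n+\min\{k,n-k\}+(\hat\gamma_P+4\gamma_P+2)f_\eta(n).$$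
   Context: Nonrecursive SELECT. The input is a list $X=(x_1,\dots,x_n)$ of elements of a totally ordered set (repeated values allowed) and an integer $1\le k\le n$. Let $\mathcal R$ be a deterministic routine that finds the $i$th smallest of any $m$ elements using at most $\gamma_P m$ comparisons. 1. Choose a set $I$ of $s$ positions uniformly at random among all $s$-subsets of $\{1,\dots,n\}$. The sample is $S=(x_j)_{j\in I}$ with sorted elements $y_1^*\le\dots\le y_s^*$. 2. Set $i_u:=\max\{\lceil ks/n-g\rceil,1\}$ and $i_v:=\min\{\lceil ks/n+g\rceil,s\}$. Compute $u:=y_{i_u}^*$ and $v:=y_{i_v}^*$ using $\mathcal R$ at most twice on at most $s$ elements, so this step uses at most $2\gamma_P s$ comparisons. 3. Partition. Each $x_j$ with $j\notin I$ is compared with the pivots. - If $k<n/2$: $x_j$ is compared with $v$ first, and with $u$ only if $x_j<v$ and $u<v$. - If $k\ge n/2$: $x_j$ is compared with $u$ first, and with $v$ only if $x_j>u$ and $u<v$. Sample elements are not compared. Hence this step uses $c$ comparisons, where $c=n-s$ if $u=v$, $c=(n-s)+|\{j\notin I:x_j<v\}|$ if $u<v$ and $k<n/2$, and $c=(n-s)+|\{j\notin I:x_j>u\}|$ if $u<v$ and $k\ge n/2$. 4. Let $L=\{x<u\}$, $U=\{x=u\}$, $M=\{u<x<v\}$ and $R=\{x>v\}$. - If $|L|<k\le|L\cup U|$, return $u$; if $|L\cup U\cup M|<k\le n-|R|$, return $v$. In either case set $\hat n:=0$. - Otherwise let $\hat X$ be $L$ if $k\le|L|$, else $R$ if $n-|R|<k$,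 else $M$. Let $\hat n:=|\hat X|$ and find the answer in $\hat X$ with $\mathcal R$, using at most $\gamma_P\hat n$ comparisons. The total count $c_{nk}$ consists of the comparisons in steps 2, 3 and 4, so $c_{nk}\le 2\gamma_P s+c+\gamma_P\hat n$. $\mathrm{P}$ and $\mathrm{E}$ are with respect to the random sample. *)

theory Defs
  imports "HOL-Probability.Probability"
begin

text \<open>Sample space: all s-subsets of positions; the sample is drawn uniformly from it.\<close>
definition samples :: "nat \<Rightarrow> nat \<Rightarrow> nat set set" where
  "samples n s = {I. I \<subseteq> {..<n} \<and> card I = s}"

definition sample_size :: "real \<Rightarrow> real \<Rightarrow> nat \<Rightarrow> nat" where
  "sample_size \<alpha> \<epsilon>s n = min (nat \<lceil>\<alpha> * real n powr \<epsilon>s\<rceil>) (n - 1)"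

definition gap :: "real \<Rightarrow> real \<Rightarrow> nat \<Rightarrow> nat \<Rightarrow> real" where
  "gap \<beta> \<epsilon> s n = sqrt (\<beta> * real s * real n powr \<epsilon>)"

text \<open>Sorted sample y_1^*, ..., y_s^* (1-based ranks, stored 0-based in the list).\<close>
definition sorted_sample :: "'a::linorder list \<Rightarrow> nat set \<Rightarrow> 'a list" where
  "sorted_sample xs I = sort (map (\<lambda>j. xs ! j) (sorted_list_of_set I))"

definition idx_u :: "nat \<Rightarrow> nat \<Rightarrow> nat \<Rightarrow> real \<Rightarrow> nat" where
  "idx_u n k s g = nat (max \<lceil>real k * real s / real n - g\<rceil> 1)"

definition idx_v :: "nat \<Rightarrow> nat \<Rightarrow> nat \<Rightarrow> real \<Rightarrow> nat" where
  "idx_v n k s g = nat (min \<lceil>real k * real s / real n + g\<rceil> (int s))"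

definition pivot_u :: "'a::linorder list \<Rightarrow> nat \<Rightarrow> nat \<Rightarrow> real \<Rightarrow> nat set \<Rightarrow> 'a" where
  "pivot_u xs k s g I = sorted_sample xs I ! (idx_u (length xs) k s g - 1)"

definition pivot_v :: "'a::linorder list \<Rightarrow> nat \<Rightarrow> nat \<Rightarrow> real \<Rightarrow> nat set \<Rightarrow> 'a" where
  "pivot_v xs k s g I = sorted_sample xs I ! (idx_v (length xs) k s g - 1)"

definition part_cost :: "'a::linorder list \<Rightarrow> nat \<Rightarrow> nat set \<Rightarrow> 'a \<Rightarrow> 'a \<Rightarrow> nat" where
  "part_cost xs k I u v =
     (let n = length xs in
      (n - card I) +
      (if u = v then 0
       else if 2 * k < n then card {j. j < n \<and> j \<notin> I \<and> xs ! j < v}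
       else card {j. j < n \<and> j \<notin> I \<and> xs ! j > u}))"

text \<open>Size \<hat>n of the set handed to the routine in step 4.\<close>
definition hat_n :: "'a::linorder list \<Rightarrow> nat \<Rightarrow> 'a \<Rightarrow> 'a \<Rightarrow> nat" where
  "hat_n xs k u v =
     (let n = length xs;
          L = card {j. j < n \<and> xs ! j < u};
          U = card {j. j < n \<and> xs ! j = u};
          M = card {j. j < n \<and> u < xs ! j \<and> xs ! j < v};
          R = card {j. j < n \<and> xs ! j > v}
      in if (L < k \<and> k \<le> L + U) \<or> (L + U + M < k \<and> k \<le> n - R) then 0
         else if k \<le> L then L
         else if n - R < k then R
         else M)"

text \<open>Upper bound 2 \<gamma>_P s + c + \<gamma>_P \<hat>n on the comparison count for sample I.\<close>
definition cost_bound :: "real \<Rightarrow> 'a::linorder list \<Rightarrow> nat \<Rightarrow> nat \<Rightarrow> real \<Rightarrow> nat set \<Rightarrow> real" where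
  "cost_bound \<gamma>P xs k s g I =
     (let u = pivot_u xs k s g I; v = pivot_v xs k s g I in
      2 * \<gamma>P * real s + real (part_cost xs k I u v) + \<gamma>P * real (hat_n xs k u v))"

end

theory Submission
  imports Defs
begin

text \<open>
  For a fixed set A of m positions, the number of positions of A in a uniformly random s-subset
  of the n positions is hypergeometric; its moment generating function is dominated by that of
  the binomial distribution with parameters s and m / n, so Hoeffding's lemma bounds the
  probability of a deviation t from s m / n by exp (-2 t^2 / s).
  Apply this with deviation g to the positions of the m smallest entries for the four ranks
  m = k, k - 1, k + 2 slack, k - 2 slack, where slack = g n / s.
  Outside these four events, of total probability at most 4 exp (-2 g^2 / s) = 4 exp (-2 \<beta> n powr \<epsilon>),
  partitioning costs at most n - s + min k (n - k) + 2 slack comparisons and the set handed to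
  the final selection has fewer than 4 slack elements; on the remaining samples both counts are
  at most n.  Finally the choice of s and g gives slack \<le> sqrt (\<beta> / \<alpha>) n powr \<eta>.
\<close>

section \<open>Uniformly random subsets\<close>

lemma finite_samples [simp]: "finite (samples n s)"
  unfolding samples_def by (rule finite_subset[of _ "Pow {..<n}"]) auto

lemma card_samples: "card (samples n s) = n choose s"
  unfolding samples_def using n_subsets[of "{..<n}" s] by simp

lemma samples_nonempty: "s \<le> n \<Longrightarrow> samples n s \<noteq> {}"
  using card_samples[of n s] by auto

lemma card_samples_supset:
  assumes J: "J \<subseteq> {..<n}" "card J \<le> s"
  shows "card {I \<in> samples n s. J \<subseteq> I} = (n - card J) choose (s - card J)"
proof -
  have fin: "finite J" "\<And>I. I \<subseteq> {..<n} \<Longrightarrow> finite I" using J(1) finite_subset by auto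
  have "bij_betw (\<lambda>I. I - J) {I \<in> samples n s. J \<subseteq> I} {K. K \<subseteq> {..<n} - J \<and> card K = s - card J}"
  proof (rule bij_betw_byWitness[where f' = "\<lambda>K. K \<union> J"])
    have "card (K \<union> J) = s" if "K \<subseteq> {..<n} - J" "card K = s - card J" for K
    proof -
      have "card (K \<union> J) = card K + card J"
        using that fin by (intro card_Un_disjoint) auto
      then show ?thesis using that J by simp
    qed
    then show "(\<lambda>K. K \<union> J) ` {K. K \<subseteq> {..<n} - J \<and> card K = s - card J} \<subseteq> {I \<in> samples n s. J \<subseteq> I}"
      using J by (auto simp: samples_def)
  qed (use J fin in \<open>auto simp: samples_def card_Diff_subset\<close>)
  then have "card {I \<in> samples n s. J \<subseteq> I} = card ({..<n} - J) choose (s - card J)"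
    by (simp add: bij_betw_same_card n_subsets)
  then show ?thesis using J fin by (simp add: card_Diff_subset)
qed

lemma sum_samples_choose_card_Int:
  assumes A: "A \<subseteq> {..<n}" and "j \<le> s"
  shows "(\<Sum>I\<in>samples n s. card (I \<inter> A) choose j) = (card A choose j) * ((n - j) choose (s - j))"
proof -
  define subs where "subs = {J. J \<subseteq> A \<and> card J = j}"
  have fin: "finite A" "finite subs"
    using A finite_subset unfolding subs_def by (auto intro: finite_subset[of _ "Pow A"])
  have "(\<Sum>I\<in>samples n s. card (I \<inter> A) choose j) = (\<Sum>I\<in>samples n s. card {J \<in> subs. J \<subseteq> I})"
  proof (intro sum.cong refl)
    fix I
    have "card (I \<inter> A) choose j = card {J. J \<subseteq> I \<inter> A \<and> card J = j}"
      using fin by (intro n_subsets[symmetric]) simp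
    also have "{J. J \<subseteq> I \<inter> A \<and> card J = j} = {J \<in> subs. J \<subseteq> I}"
      by (auto simp: subs_def)
    finally show "card (I \<inter> A) choose j = card {J \<in> subs. J \<subseteq> I}" .
  qed
  also have "\<dots> = (\<Sum>J\<in>subs. card {I \<in> samples n s. J \<subseteq> I})"
    using sum.swap_restrict[OF finite_samples fin(2), of "\<lambda>_ _. 1::nat" "\<lambda>I J. J \<subseteq> I"] by simp
  also have "\<dots> = (\<Sum>J\<in>subs. (n - j) choose (s - j))"
    using A assms(2) by (intro sum.cong refl) (auto simp: subs_def card_samples_supset)
  also have "\<dots> = (card A choose j) * ((n - j) choose (s - j))"
    using n_subsets[OF fin(1), of j] by (simp add: subs_def)
  finally show ?thesis .
qed

lemma binomial_le_binomial_mult_ratio_pow: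
  assumes "m \<le> n"
  shows "real (m choose j) \<le> real (n choose j) * (real m / real n) ^ j"
proof (cases "j \<le> m")
  case True
  have "real (m choose j) = (\<Prod>i = 0..<j. real (m - i) / real (j - i))"
    using True by (rule binomial_altdef_of_nat)
  also have "\<dots> \<le> (\<Prod>i = 0..<j. real (n - i) / real (j - i) * (real m / real n))"
  proof (intro prod_mono conjI)
    fix i assume "i \<in> {0..<j}"
    then have "real (m - i) * real n \<le> real (n - i) * real m"
      using True assms by (simp add: of_nat_diff algebra_simps mult_left_mono)
    then have "real (m - i) \<le> real (n - i) * real m / real n"
      using \<open>i \<in> {0..<j}\<close> True assms by (simp add: pos_le_divide_eq)
    then have "real (m - i) / real (j - i) \<le> real (n - i) * real m / real n / real (j - i)"
      by (rule divide_right_mono) simp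
    then show "real (m - i) / real (j - i) \<le> real (n - i) / real (j - i) * (real m / real n)"
      by (simp add: mult.commute)
  qed simp
  also have "\<dots> = real (n choose j) * (real m / real n) ^ j"
    using True assms by (simp only: prod.distrib prod_constant binomial_altdef_of_nat) simp
  finally show ?thesis .
qed (simp add: binomial_eq_0)

text \<open>
  Expanding (1 + w)^X as the sum of (X choose j) w^j, the hypergeometric moment
  E (X choose j) = (s choose j) (m choose j) / (n choose j) is at most the binomial one
  (s choose j) (m / n)^j.
\<close>
lemma expectation_pow_card_Int_samples_le:
  assumes A: "A \<subseteq> {..<n}" and "s \<le> n" and "0 \<le> w"
  defines "p \<equiv> real (card A) / real n"
  shows "measure_pmf.expectation (pmf_of_set (samples n s)) (\<lambda>I. (1 + w) ^ card (I \<inter> A))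
           \<le> (1 + p * w) ^ s"
proof -
  have card_le: "card (I \<inter> A) \<le> s" if "I \<in> samples n s" for I
    using that finite_subset[of I "{..<n}"] card_mono[of I "I \<inter> A"] by (auto simp: samples_def)
  have "(\<Sum>I\<in>samples n s. (1 + w) ^ card (I \<inter> A))
      = (\<Sum>I\<in>samples n s. \<Sum>j\<le>s. real (card (I \<inter> A) choose j) * w ^ j)"
  proof (intro sum.cong refl)
    fix I assume "I \<in> samples n s"
    have "(1 + w) ^ card (I \<inter> A) = (\<Sum>j\<le>card (I \<inter> A). real (card (I \<inter> A) choose j) * w ^ j)"
      using binomial_ring[of w 1 "card (I \<inter> A)"] by (simp add: add.commute mult.commute)
    also have "\<dots> = (\<Sum>j\<le>s. real (card (I \<inter> A) choose j) * w ^ j)"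
      using card_le[OF \<open>I \<in> samples n s\<close>] by (intro sum.mono_neutral_left) auto
    finally show "(1 + w) ^ card (I \<inter> A) = (\<Sum>j\<le>s. real (card (I \<inter> A) choose j) * w ^ j)" .
  qed
  also have "\<dots> = (\<Sum>j\<le>s. real (card A choose j) * real ((n - j) choose (s - j)) * w ^ j)"
    by (subst sum.swap)
      (simp add: sum_distrib_right[symmetric] sum_samples_choose_card_Int[OF A] flip: of_nat_sum)
  also have "\<dots> \<le> (\<Sum>j\<le>s. real (n choose s) * (real (s choose j) * (p * w) ^ j))"
  proof (intro sum_mono)
    fix j assume "j \<in> {..s}"
    have "real (card A choose j) * real ((n - j) choose (s - j))
        \<le> real (n choose j) * p ^ j * real ((n - j) choose (s - j))"
      unfolding p_def using A card_mono[OF _ A]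
      by (intro mult_right_mono binomial_le_binomial_mult_ratio_pow) auto
    also have "\<dots> = real (n choose s) * real (s choose j) * p ^ j"
      using choose_mult[of j s n] \<open>j \<in> {..s}\<close> \<open>s \<le> n\<close> by (simp flip: of_nat_mult)
    finally have "real (card A choose j) * real ((n - j) choose (s - j)) * w ^ j
        \<le> real (n choose s) * real (s choose j) * p ^ j * w ^ j"
      using \<open>0 \<le> w\<close> by (intro mult_right_mono) auto
    then show "real (card A choose j) * real ((n - j) choose (s - j)) * w ^ j
        \<le> real (n choose s) * (real (s choose j) * (p * w) ^ j)"
      by (simp add: power_mult_distrib mult.assoc)
  qed
  also have "\<dots> = real (n choose s) * (1 + p * w) ^ s"
    using binomial_ring[of "p * w" 1 s] by (simp add: add.commute mult.commute sum_distrib_left)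
  finally show ?thesis
    using \<open>s \<le> n\<close> by (simp add: integral_pmf_of_set samples_nonempty card_samples field_simps)
qed

lemma samples_upper_tail:
  assumes A: "A \<subseteq> {..<n}" and "s \<le> n" "0 < s" "0 < t"
  shows "measure_pmf.prob (pmf_of_set (samples n s))
           {I. real s * real (card A) / real n + t \<le> real (card (I \<inter> A))}
         \<le> exp (- 2 * t\<^sup>2 / real s)"
proof -
  define D where "D = pmf_of_set (samples n s)"
  define p where "p = real (card A) / real n"
  define l where "l = 4 * t / real s"
  have "0 < l" "0 \<le> p" using assms by (auto simp: l_def p_def)
  have integrable: "integrable D f" for f :: "nat set \<Rightarrow> real"
    using \<open>s \<le> n\<close> by (auto simp: D_def samples_nonempty intro: integrable_measure_pmf_finite)
  have "measure_pmf.prob D {I. real s * p + t \<le> real (card (I \<inter> A))}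
      \<le> exp (- l * (real s * p + t)) * measure_pmf.expectation D (\<lambda>I. exp (l * real (card (I \<inter> A))))"
    using measure_pmf.Chernoff_ineq_ge[of l D UNIV "\<lambda>I. real (card (I \<inter> A))" "real s * p + t"] \<open>0 < l\<close>
    by (simp add: set_lebesgue_integral_def set_integrable_def integrable)
  also have "measure_pmf.expectation D (\<lambda>I. exp (l * real (card (I \<inter> A))))
      = measure_pmf.expectation D (\<lambda>I. (1 + (exp l - 1)) ^ card (I \<inter> A))"
    by (simp add: exp_of_nat_mult[symmetric] mult.commute)
  also have "\<dots> \<le> (1 + p * (exp l - 1)) ^ s"
    unfolding D_def p_def using \<open>0 < l\<close> by (intro expectation_pow_card_Int_samples_le A \<open>s \<le> n\<close>) auto
  also have "\<dots> \<le> exp (l * p + l\<^sup>2 / 8) ^ s"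
  proof (intro power_mono)
    have "0 < 1 + p * (exp l - 1)" using \<open>0 < l\<close> \<open>0 \<le> p\<close> by (simp add: add_pos_nonneg)
    moreover have "ln (1 + p * (exp l - 1)) \<le> l * p + l\<^sup>2 / 8"
      using Hoeffdings_lemma_aux[of l p] \<open>0 < l\<close> \<open>0 \<le> p\<close> by simp
    ultimately show "1 + p * (exp l - 1) \<le> exp (l * p + l\<^sup>2 / 8)"
      by (metis exp_le_cancel_iff exp_ln)
  qed (use \<open>0 < l\<close> \<open>0 \<le> p\<close> in auto)
  also have "exp (- l * (real s * p + t)) * exp (l * p + l\<^sup>2 / 8) ^ s = exp (- 2 * t\<^sup>2 / real s)"
    using \<open>0 < s\<close> by (simp add: l_def exp_of_nat_mult[symmetric] exp_add[symmetric] field_simps power2_eq_square)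
  finally show ?thesis
    by (simp add: D_def p_def mult_left_mono)
qed

lemma samples_lower_tail:
  assumes A: "A \<subseteq> {..<n}" and "s \<le> n" "0 < s" "0 < t"
  shows "measure_pmf.prob (pmf_of_set (samples n s))
           {I. real (card (I \<inter> A)) \<le> real s * real (card A) / real n - t}
         \<le> exp (- 2 * t\<^sup>2 / real s)"
proof -
  define A' where "A' = {..<n} - A"
  have "finite A" using A finite_subset by blast
  then have card_A': "real (card A') = real n - real (card A)"
    using A card_mono[OF _ A] by (simp add: A'_def card_Diff_subset of_nat_diff)
  have "card (I \<inter> A') = s - card (I \<inter> A)" "card (I \<inter> A) \<le> s" if "I \<in> samples n s" for I
  proof -
    have "finite I" "I \<inter> A' = I - I \<inter> A"
      using that finite_subset[of I "{..<n}"] by (auto simp: samples_def A'_def)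
    then show "card (I \<inter> A') = s - card (I \<inter> A)" "card (I \<inter> A) \<le> s"
      using that by (auto simp: samples_def card_Diff_subset card_mono)
  qed
  then have "measure_pmf.prob (pmf_of_set (samples n s))
              {I. real (card (I \<inter> A)) \<le> real s * real (card A) / real n - t}
           = measure_pmf.prob (pmf_of_set (samples n s))
              {I. real s * real (card A') / real n + t \<le> real (card (I \<inter> A'))}"
    using \<open>s \<le> n\<close> \<open>0 < s\<close> samples_nonempty[OF \<open>s \<le> n\<close>]
    by (intro measure_pmf.finite_measure_eq_AE)
       (auto simp: AE_measure_pmf_iff card_A' of_nat_diff field_simps)
  also have "\<dots> \<le> exp (- 2 * t\<^sup>2 / real s)"
    using assms by (intro samples_upper_tail) (auto simp: A'_def)
  finally show ?thesis .
qed

section \<open>Positions of the smallest entries\<close>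

definition precedes :: "'a::linorder list \<Rightarrow> nat \<Rightarrow> nat \<Rightarrow> bool" where
  "precedes xs i j \<longleftrightarrow> xs ! i < xs ! j \<or> (xs ! i = xs ! j \<and> i < j)"

definition position_rank :: "'a::linorder list \<Rightarrow> nat \<Rightarrow> nat" where
  "position_rank xs j = card {i. i < length xs \<and> precedes xs i j}"

definition lowest :: "'a::linorder list \<Rightarrow> nat \<Rightarrow> nat set" where
  "lowest xs m = {j. j < length xs \<and> position_rank xs j < m}"

lemma precedes_total: "i \<noteq> j \<Longrightarrow> precedes xs i j \<or> precedes xs j i"
  unfolding precedes_def by (metis linorder_neqE)

lemma precedes_irrefl: "\<not> precedes xs i i"
  by (simp add: precedes_def)

lemma precedes_trans: "precedes xs i j \<Longrightarrow> precedes xs j l \<Longrightarrow> precedes xs i l"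
  unfolding precedes_def by (auto elim: less_trans less_le_trans le_less_trans)

lemma position_rank_less:
  assumes "precedes xs i j" "i < length xs"
  shows "position_rank xs i < position_rank xs j"
proof -
  have "{l. l < length xs \<and> precedes xs l i} \<subset> {l. l < length xs \<and> precedes xs l j}"
    using assms precedes_trans[of xs _ i j] precedes_irrefl[of xs i] by blast
  then show ?thesis
    unfolding position_rank_def by (intro psubset_card_mono) auto
qed

lemma bij_betw_position_rank: "bij_betw (position_rank xs) {..<length xs} {..<length xs}"
proof -
  have inj: "inj_on (position_rank xs) {..<length xs}"
  proof (rule inj_onI)
    fix i j assume "i \<in> {..<length xs}" "j \<in> {..<length xs}" "position_rank xs i = position_rank xs j"
    then show "i = j"
      using position_rank_less[of xs i j] position_rank_less[of xs j i] precedes_total[of i j xs]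
      by auto
  qed
  have "position_rank xs j < length xs" if "j < length xs" for j
  proof -
    have "position_rank xs j \<le> card ({..<length xs} - {j})"
      unfolding position_rank_def by (intro card_mono) (auto simp: precedes_irrefl)
    then show ?thesis using that by simp
  qed
  then have "position_rank xs ` {..<length xs} \<subseteq> {..<length xs}" by auto
  moreover have "card (position_rank xs ` {..<length xs}) = length xs"
    using card_image[OF inj] by simp
  ultimately have "position_rank xs ` {..<length xs} = {..<length xs}"
    by (intro card_subset_eq) auto
  with inj show ?thesis by (simp add: bij_betw_def)
qed

lemma lowest_subset: "lowest xs m \<subseteq> {..<length xs}"
  by (auto simp: lowest_def)

lemma card_lowest:
  assumes "m \<le> length xs"
  shows "card (lowest xs m) = m"
proof -
  have "bij_betw (position_rank xs) (lowest xs m) {..<m}"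
    using bij_betw_subset[OF bij_betw_position_rank, of "lowest xs m" xs] assms
      bij_betw_position_rank[of xs]
    by (auto simp: lowest_def bij_betw_def image_iff)
  then show ?thesis by (simp add: bij_betw_same_card)
qed

lemma lowest_length: "lowest xs (length xs) = {..<length xs}"
  using card_lowest[of "length xs" xs] lowest_subset[of xs "length xs"]
  by (intro card_subset_eq) auto

lemma lowest_0: "lowest xs 0 = {}"
  by (simp add: lowest_def)

lemma lowest_downward_closed:
  assumes "j \<in> lowest xs m" "i < length xs" "precedes xs i j"
  shows "i \<in> lowest xs m"
  using assms position_rank_less[of xs i j] by (auto simp: lowest_def)

lemma card_less_lt_of_sample_count:
  assumes I: "I \<subseteq> {..<length xs}" and "m \<le> length xs"
    and "i \<le> card (I \<inter> lowest xs m)" and "card {j \<in> I. xs ! j < y} < i"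
  shows "card {j. j < length xs \<and> xs ! j < y} < m"
proof -
  have "finite I" using I finite_subset by blast
  have "\<not> I \<inter> lowest xs m \<subseteq> {j \<in> I. xs ! j < y}"
    using assms card_mono[of "{j \<in> I. xs ! j < y}" "I \<inter> lowest xs m"] \<open>finite I\<close> by fastforce
  then obtain j0 where j0: "j0 \<in> I" "j0 \<in> lowest xs m" "\<not> xs ! j0 < y" by blast
  have "{j. j < length xs \<and> xs ! j < y} \<subseteq> lowest xs m - {j0}"
    using j0 lowest_downward_closed[OF j0(2)] by (auto simp: precedes_def not_less intro: less_le_trans)
  then have "card {j. j < length xs \<and> xs ! j < y} \<le> card (lowest xs m - {j0})"
    by (intro card_mono) (auto intro: finite_subset[OF lowest_subset])
  also have "\<dots> < card (lowest xs m)"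
    using j0 by (intro card_Diff1_less) (auto intro: finite_subset[OF lowest_subset])
  also have "\<dots> = m"
    using card_lowest[OF \<open>m \<le> length xs\<close>] .
  finally show ?thesis .
qed

lemma card_greater_lt_of_sample_count:
  assumes I: "I \<subseteq> {..<length xs}" and "m \<le> length xs"
    and "card (I \<inter> lowest xs m) < i" and "i \<le> card {j \<in> I. xs ! j \<le> y}"
  shows "card {j. j < length xs \<and> y < xs ! j} < length xs - m"
proof -
  have "finite I" using I finite_subset by blast
  have "\<not> {j \<in> I. xs ! j \<le> y} \<subseteq> I \<inter> lowest xs m"
    using assms card_mono[of "I \<inter> lowest xs m" "{j \<in> I. xs ! j \<le> y}"] \<open>finite I\<close> by fastforce
  then obtain j0 where j0: "j0 \<in> I" "j0 \<notin> lowest xs m" "xs ! j0 \<le> y" by blast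
  have "{j. j < length xs \<and> y < xs ! j} \<subseteq> ({..<length xs} - lowest xs m) - {j0}"
    using j0 I lowest_downward_closed[of _ xs m j0] by (fastforce simp: precedes_def)
  then have "card {j. j < length xs \<and> y < xs ! j} \<le> card (({..<length xs} - lowest xs m) - {j0})"
    by (intro card_mono) auto
  also have "\<dots> < card ({..<length xs} - lowest xs m)"
    using j0 I by (intro card_Diff1_less) auto
  also have "\<dots> = length xs - m"
    using card_lowest[OF \<open>m \<le> length xs\<close>] lowest_subset[of xs m]
    by (simp add: card_Diff_subset finite_subset)
  finally show ?thesis .
qed

lemma card_between_le:
  fixes xs :: "'a::linorder list"
  assumes "a < b"
  shows "card {j. j < n \<and> a < xs ! j \<and> xs ! j < b} + n
           \<le> card {j. j < n \<and> xs ! j < b} + card {j. j < n \<and> a < xs ! j}"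
proof -
  have "card {j. j < n \<and> a < xs ! j \<and> xs ! j < b} + card {j. j < n \<and> \<not> a < xs ! j}
      = card ({j. j < n \<and> a < xs ! j \<and> xs ! j < b} \<union> {j. j < n \<and> \<not> a < xs ! j})"
    by (intro card_Un_disjoint[symmetric]) auto
  also have "\<dots> \<le> card {j. j < n \<and> xs ! j < b}"
    using \<open>a < b\<close> by (intro card_mono) auto
  finally have "card {j. j < n \<and> a < xs ! j \<and> xs ! j < b} + card {j. j < n \<and> \<not> a < xs ! j}
      \<le> card {j. j < n \<and> xs ! j < b}" .
  moreover have "card {j. j < n \<and> \<not> a < xs ! j} + card {j. j < n \<and> a < xs ! j}
      = card ({j. j < n \<and> \<not> a < xs ! j} \<union> {j. j < n \<and> a < xs ! j})"
    by (intro card_Un_disjoint[symmetric]) auto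
  moreover have "{j. j < n \<and> \<not> a < xs ! j} \<union> {j. j < n \<and> a < xs ! j} = {..<n}"
    by auto
  ultimately show ?thesis by simp
qed

lemma sorted_length_filter_less_nth:
  assumes "sorted ys" "i < length ys"
  shows "length (filter (\<lambda>y. y < ys ! i) ys) \<le> i"
proof -
  have "{t. t < length ys \<and> ys ! t < ys ! i} \<subseteq> {..<i}"
    using sorted_nth_mono[OF assms(1), of i] by (auto simp: not_less[symmetric])
  then have "card {t. t < length ys \<and> ys ! t < ys ! i} \<le> card {..<i}"
    by (intro card_mono) auto
  then show ?thesis
    by (simp add: length_filter_conv_card)
qed

lemma sorted_length_filter_le_nth:
  assumes "sorted ys" "i < length ys"
  shows "i < length (filter (\<lambda>y. y \<le> ys ! i) ys)"
proof -
  have "{..i} \<subseteq> {t. t < length ys \<and> ys ! t \<le> ys ! i}"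
    using sorted_nth_mono[OF assms(1)] assms(2) by auto
  then have "card {..i} \<le> card {t. t < length ys \<and> ys ! t \<le> ys ! i}"
    by (intro card_mono) auto
  then show ?thesis
    by (simp add: length_filter_conv_card)
qed

lemma sorted_sorted_sample: "sorted (sorted_sample xs I)"
  by (simp add: sorted_sample_def)

lemma length_sorted_sample: "finite I \<Longrightarrow> length (sorted_sample xs I) = card I"
  by (simp add: sorted_sample_def)

lemma card_sample_eq_length_filter:
  assumes "finite I"
  shows "card {j \<in> I. P (xs ! j)} = length (filter P (sorted_sample xs I))"
  using assms by (simp add: sorted_sample_def filter_sort filter_map comp_def
      distinct_card[symmetric])

lemma card_sample_less_sorted_sample:
  assumes "finite I" "i < card I"
  shows "card {j \<in> I. xs ! j < sorted_sample xs I ! i} \<le> i"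
  using sorted_length_filter_less_nth[OF sorted_sorted_sample, of i xs I] assms
    card_sample_eq_length_filter[of I "\<lambda>y. y < sorted_sample xs I ! i" xs]
  by (simp add: length_sorted_sample)

lemma card_sample_le_sorted_sample:
  assumes "finite I" "i < card I"
  shows "i < card {j \<in> I. xs ! j \<le> sorted_sample xs I ! i}"
  using sorted_length_filter_le_nth[OF sorted_sorted_sample, of i xs I] assms
    card_sample_eq_length_filter[of I "\<lambda>y. y \<le> sorted_sample xs I ! i" xs]
  by (simp add: length_sorted_sample)

section \<open>A single run of SELECT\<close>

lemma hat_n_le_length: "hat_n xs k a b \<le> length xs"
  unfolding hat_n_def Let_def by (auto intro!: card_mono[of "{..<length xs}", simplified])

lemma part_cost_le_length: "part_cost xs k I a b \<le> (length xs - card I) + length xs"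
  unfolding part_cost_def Let_def by (auto intro!: card_mono[of "{..<length xs}", simplified])

lemma less_idx_u: "real c < real k * real s / real n - g \<Longrightarrow> c < idx_u n k s g"
  unfolding idx_u_def by linarith

lemma idx_u_le: "real k * real s / real n - g < real c \<Longrightarrow> 0 < c \<Longrightarrow> idx_u n k s g \<le> c"
  unfolding idx_u_def by (simp add: ceiling_le_iff nat_le_iff less_imp_le)

lemma idx_v_le: "real k * real s / real n + g \<le> real c \<Longrightarrow> idx_v n k s g \<le> c"
  unfolding idx_v_def by (simp add: nat_le_iff min_le_iff_disj ceiling_le_iff)

lemma less_idx_v: "real c < real k * real s / real n + g \<Longrightarrow> c < s \<Longrightarrow> c < idx_v n k s g"
  unfolding idx_v_def by (simp add: zless_nat_eq_int_zless less_ceiling_iff)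

lemma idx_v_le_sample_size: "idx_v n k s g \<le> s"
  unfolding idx_v_def by simp

locale select_instance =
  fixes xs :: "'a::linorder list" and n k s :: nat and g :: real
  assumes length_xs: "length xs = n" and k: "1 \<le> k" "k \<le> n" and s: "1 \<le> s" "s \<le> n"
    and g: "0 < g"
begin

abbreviation u :: "nat set \<Rightarrow> 'a" where "u I \<equiv> pivot_u xs k s g I"
abbreviation v :: "nat set \<Rightarrow> 'a" where "v I \<equiv> pivot_v xs k s g I"

abbreviation sample_distr :: "nat set pmf" where "sample_distr \<equiv> pmf_of_set (samples n s)"

definition failure_prob :: real where "failure_prob = exp (- 2 * g\<^sup>2 / real s)"

definition slack :: real where "slack = g * real n / real s"

definition undersampled :: "nat \<Rightarrow> nat set set" where
  "undersampled m = {I. real (card (I \<inter> lowest xs m)) \<le> real s * real m / real n - g}"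

definition oversampled :: "nat \<Rightarrow> nat set set" where
  "oversampled m = {I. real s * real m / real n + g \<le> real (card (I \<inter> lowest xs m))}"

definition typical_cost :: "real \<Rightarrow> real" where
  "typical_cost \<gamma>P = real n + real (min k (n - k)) + (2 * \<gamma>P - 1) * real s + (4 * \<gamma>P + 2) * slack"

definition rank_above :: nat where "rank_above = min n (nat \<lceil>real k + 2 * slack\<rceil>)"

definition rank_below :: nat where "rank_below = nat \<lfloor>real k - 2 * slack\<rfloor>"

text \<open>
  Off these events u and v bracket the k-th smallest entry (unless k or n - k is below slack),
  and each lies within rank distance 2 slack of it.
\<close>
definition unrepresentative :: "nat set set" where
  "unrepresentative = undersampled k \<union> oversampled (k - 1) \<union> undersampled rank_above
     \<union> oversampled rank_below"

text \<open>
  The partitioning cost depends only on v when 2 k < n and only on u otherwise, so only one of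
  the four events matters there.
\<close>
definition partition_unrepresentative :: "nat set set" where
  "partition_unrepresentative = (if 2 * k < n then undersampled rank_above else oversampled rank_below)"

lemma slack_pos: "0 < slack"
  using g k s by (simp add: slack_def)

lemma idx_u_le_idx_v: "idx_u n k s g \<le> idx_v n k s g"
proof -
  define x where "x = real k * real s / real n"
  have "x \<le> real s" "0 \<le> x"
    using k s by (simp_all add: x_def field_simps mult_right_mono)
  moreover have "\<lceil>x - g\<rceil> \<le> \<lceil>x + g\<rceil>" using g by (intro ceiling_mono) simp
  ultimately have "max \<lceil>x - g\<rceil> 1 \<le> min \<lceil>x + g\<rceil> (int s)"
    using g s by (simp add: ceiling_le_iff le_ceiling_iff)
  then show ?thesis
    unfolding idx_u_def idx_v_def x_def by (rule nat_mono)
qed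

lemma samplesD:
  assumes "I \<in> samples n s"
  shows "I \<subseteq> {..<length xs}" "card I = s" "finite I"
  using assms finite_subset[of I "{..<n}"] by (auto simp: samples_def length_xs)

lemma idx_bounds: "1 \<le> idx_u n k s g" "1 \<le> idx_v n k s g" "idx_v n k s g \<le> s"
  using idx_u_le_idx_v idx_v_le_sample_size[of n k s g] by (auto simp: idx_u_def)

lemma pivot_u_order_statistic:
  assumes "I \<in> samples n s"
  shows "card {j \<in> I. xs ! j < u I} < idx_u n k s g" "idx_u n k s g \<le> card {j \<in> I. xs ! j \<le> u I}"
proof -
  have "idx_u n k s g - 1 < card I"
    using idx_bounds idx_u_le_idx_v samplesD[OF assms] by linarith
  then show "card {j \<in> I. xs ! j < u I} < idx_u n k s g" "idx_u n k s g \<le> card {j \<in> I. xs ! j \<le> u I}"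
    using card_sample_less_sorted_sample[of I "idx_u n k s g - 1" xs]
      card_sample_le_sorted_sample[of I "idx_u n k s g - 1" xs] samplesD[OF assms] idx_bounds
    by (auto simp: pivot_u_def length_xs)
qed

lemma pivot_v_order_statistic:
  assumes "I \<in> samples n s"
  shows "card {j \<in> I. xs ! j < v I} < idx_v n k s g" "idx_v n k s g \<le> card {j \<in> I. xs ! j \<le> v I}"
proof -
  have "idx_v n k s g - 1 < card I"
    using idx_bounds samplesD[OF assms] by linarith
  then show "card {j \<in> I. xs ! j < v I} < idx_v n k s g" "idx_v n k s g \<le> card {j \<in> I. xs ! j \<le> v I}"
    using card_sample_less_sorted_sample[of I "idx_v n k s g - 1" xs]
      card_sample_le_sorted_sample[of I "idx_v n k s g - 1" xs] samplesD[OF assms] idx_bounds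
    by (auto simp: pivot_v_def length_xs)
qed

lemma pivot_u_le_pivot_v:
  assumes "I \<in> samples n s"
  shows "u I \<le> v I"
  using sorted_nth_mono[OF sorted_sorted_sample, of "idx_u n k s g - 1" "idx_v n k s g - 1" xs I]
    idx_u_le_idx_v idx_v_le_sample_size[of n k s g] samplesD[OF assms]
  by (simp add: pivot_u_def pivot_v_def length_xs length_sorted_sample idx_u_def)

lemma rank_above_le: "rank_above \<le> n"
  by (simp add: rank_above_def)

lemma rank_above_less_shifted: "real rank_above < real k + 2 * slack + 1"
  using slack_pos unfolding rank_above_def by linarith

lemma rank_above_ge_shifted: "rank_above \<noteq> n \<Longrightarrow> real k + 2 * slack \<le> real rank_above"
  unfolding rank_above_def by (simp add: min_def split: if_splits) linarith

lemma rank_below_le: "rank_below \<le> k"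
  using slack_pos unfolding rank_below_def by linarith

lemma rank_below_greater_shifted: "real k - 2 * slack - 1 < real rank_below"
  unfolding rank_below_def by linarith

lemma rank_below_le_shifted: "rank_below \<noteq> 0 \<Longrightarrow> real rank_below \<le> real k - 2 * slack"
  unfolding rank_below_def by linarith

lemma sample_rank_shift:
  "real s * (real k + c * slack) / real n = real k * real s / real n + c * g"
  using k s by (simp add: slack_def field_simps)

lemma card_less_pivot_v:
  assumes I: "I \<in> samples n s" and "I \<notin> undersampled rank_above"
  shows "real (card {j. j < n \<and> xs ! j < v I}) < real k + 2 * slack"
proof -
  have "idx_v n k s g \<le> card (I \<inter> lowest xs rank_above)"
  proof (cases "rank_above = n")
    case True
    then show ?thesis
      using idx_bounds samplesD[OF I] lowest_length[of xs] by (simp add: length_xs Int_absorb2)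
  next
    case False
    have "real s * (real k + 2 * slack) / real n \<le> real s * real rank_above / real n"
      using rank_above_ge_shifted[OF False] by (intro divide_right_mono mult_left_mono) auto
    then show ?thesis
      using \<open>I \<notin> undersampled rank_above\<close>
      by (intro idx_v_le) (simp add: undersampled_def sample_rank_shift)
  qed
  then have "card {j. j < n \<and> xs ! j < v I} < rank_above"
    using card_less_lt_of_sample_count[OF samplesD(1)[OF I] _ _ pivot_v_order_statistic(1)[OF I]]
      rank_above_le by (simp add: length_xs)
  then show ?thesis
    using rank_above_less_shifted by linarith
qed

lemma card_greater_pivot_u:
  assumes I: "I \<in> samples n s" and "I \<notin> oversampled rank_below"
  shows "real (card {j. j < n \<and> u I < xs ! j}) < real (n - k) + 2 * slack"
proof -
  have "card (I \<inter> lowest xs rank_below) < idx_u n k s g"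
  proof (cases "rank_below = 0")
    case True
    then show ?thesis using idx_bounds by (simp add: lowest_0)
  next
    case False
    have "real s * real rank_below / real n \<le> real s * (real k - 2 * slack) / real n"
      using rank_below_le_shifted[OF False] by (intro divide_right_mono mult_left_mono) auto
    then show ?thesis
      using \<open>I \<notin> oversampled rank_below\<close> sample_rank_shift[of "- 2"]
      by (intro less_idx_u) (simp add: oversampled_def)
  qed
  then have "card {j. j < n \<and> u I < xs ! j} < n - rank_below"
    using card_greater_lt_of_sample_count[OF samplesD(1)[OF I] _ _ pivot_u_order_statistic(2)[OF I]]
      rank_below_le k by (simp add: length_xs)
  then show ?thesis
    using rank_below_greater_shifted rank_below_le k by (simp add: of_nat_diff)
qed

lemma card_less_pivot_u:
  assumes I: "I \<in> samples n s" and "I \<notin> undersampled k"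
  shows "card {j. j < n \<and> xs ! j < u I} < k \<or> real k < slack"
proof (cases "card (I \<inter> lowest xs k) = 0")
  case True
  then have "real k * real s / real n < g"
    using \<open>I \<notin> undersampled k\<close> by (simp add: undersampled_def mult.commute)
  then show ?thesis
    using k s by (simp add: slack_def field_simps)
next
  case False
  then have "idx_u n k s g \<le> card (I \<inter> lowest xs k)"
    using \<open>I \<notin> undersampled k\<close> by (intro idx_u_le) (auto simp: undersampled_def mult.commute)
  then show ?thesis
    using card_less_lt_of_sample_count[OF samplesD(1)[OF I] _ _ pivot_u_order_statistic(1)[OF I]] k
    by (simp add: length_xs)
qed

lemma card_greater_pivot_v:
  assumes I: "I \<in> samples n s" and "I \<notin> oversampled (k - 1)"
  shows "card {j. j < n \<and> v I < xs ! j} \<le> n - k \<or> real (n - k) < slack"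
proof -
  define c where "c = card (I \<inter> lowest xs (k - 1))"
  have "real s * real (k - 1) / real n \<le> real k * real s / real n"
    using k by (intro divide_right_mono) (auto simp: of_nat_diff algebra_simps)
  then have c_less: "real c < real k * real s / real n + g"
    using \<open>I \<notin> oversampled (k - 1)\<close> by (simp add: oversampled_def c_def)
  have "c \<le> s"
    using samplesD[OF I] card_mono[of I "I \<inter> lowest xs (k - 1)"] by (simp add: c_def)
  then consider "c < s" | "c = s" by linarith
  then show ?thesis
  proof cases
    case 1
    then have "c < idx_v n k s g" using c_less by (rule less_idx_v[rotated])
    then have "card {j. j < n \<and> v I < xs ! j} < n - (k - 1)"
      using card_greater_lt_of_sample_count[OF samplesD(1)[OF I] _ _ pivot_v_order_statistic(2)[OF I],
          where m = "k - 1"] k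
      by (simp add: length_xs c_def)
    then show ?thesis using k by linarith
  next
    case 2
    then have "real s * real (n - k) / real n < g"
      using c_less k by (simp add: of_nat_diff field_simps)
    then show ?thesis
      using k s by (simp add: slack_def field_simps)
  qed
qed

lemma card_between_pivots_less:
  assumes I: "I \<in> samples n s"
    and below_v: "real (card {j. j < n \<and> xs ! j < v I}) < real k + 2 * slack"
    and above_u: "real (card {j. j < n \<and> u I < xs ! j}) < real (n - k) + 2 * slack"
  shows "real (card {j. j < n \<and> u I < xs ! j \<and> xs ! j < v I}) < 4 * slack"
proof (cases "u I = v I")
  case False
  then have "u I < v I" using pivot_u_le_pivot_v[OF I] by simp
  then show ?thesis
    using card_between_le[of "u I" "v I" n xs] below_v above_u k by (simp add: of_nat_diff)
next
  case True
  then have empty: "{j. j < n \<and> u I < xs ! j \<and> xs ! j < v I} = {}" by auto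
  show ?thesis unfolding empty using slack_pos by simp
qed

lemma hat_n_less:
  assumes I: "I \<in> samples n s" and "I \<notin> unrepresentative"
  shows "real (hat_n xs k (u I) (v I)) < 4 * slack"
proof -
  define L where "L = card {j. j < n \<and> xs ! j < u I}"
  define M where "M = card {j. j < n \<and> u I < xs ! j \<and> xs ! j < v I}"
  define R where "R = card {j. j < n \<and> xs ! j > v I}"
  define below_v where "below_v = card {j. j < n \<and> xs ! j < v I}"
  define above_u where "above_u = card {j. j < n \<and> u I < xs ! j}"
  have below_v: "real below_v < real k + 2 * slack"
    using card_less_pivot_v[OF I] \<open>I \<notin> unrepresentative\<close> by (simp add: below_v_def unrepresentative_def)
  have above_u: "real above_u < real (n - k) + 2 * slack"
    using card_greater_pivot_u[OF I] \<open>I \<notin> unrepresentative\<close> by (simp add: above_u_def unrepresentative_def)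
  have "L \<le> below_v" "R \<le> above_u"
    unfolding L_def R_def below_v_def above_u_def using pivot_u_le_pivot_v[OF I]
    by (auto intro!: card_mono elim: less_le_trans le_less_trans)
  have "hat_n xs k (u I) (v I) = 0 \<or> (hat_n xs k (u I) (v I) = L \<and> k \<le> L)
      \<or> (hat_n xs k (u I) (v I) = R \<and> n - R < k) \<or> hat_n xs k (u I) (v I) = M"
    unfolding hat_n_def Let_def L_def M_def R_def length_xs by auto
  then show ?thesis
  proof (elim disjE conjE)
    assume "k \<le> L"
    then have "real k < slack"
      using card_less_pivot_u[OF I] \<open>I \<notin> unrepresentative\<close> by (auto simp: L_def unrepresentative_def)
    moreover assume "hat_n xs k (u I) (v I) = L"
    ultimately show ?thesis using \<open>L \<le> below_v\<close> below_v by linarith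
  next
    assume "n - R < k"
    moreover have "R \<le> n - k \<or> real (n - k) < slack"
      using card_greater_pivot_v[OF I] \<open>I \<notin> unrepresentative\<close> by (simp add: R_def unrepresentative_def)
    ultimately have "real (n - k) < slack" using k by (auto simp: not_le[symmetric])
    moreover assume "hat_n xs k (u I) (v I) = R"
    ultimately show ?thesis using \<open>R \<le> above_u\<close> above_u by linarith
  next
    assume "hat_n xs k (u I) (v I) = M"
    then show ?thesis
      using card_between_pivots_less[OF I] below_v above_u by (simp add: M_def below_v_def above_u_def)
  qed (use slack_pos in simp)
qed

lemma part_cost_less:
  assumes I: "I \<in> samples n s" and "I \<notin> partition_unrepresentative"
  shows "real (part_cost xs k I (u I) (v I)) < real (n - s) + real (min k (n - k)) + 2 * slack"
proof -
  define extra where "extra =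
    (if u I = v I then 0
     else if 2 * k < n then card {j. j < n \<and> j \<notin> I \<and> xs ! j < v I}
     else card {j. j < n \<and> j \<notin> I \<and> xs ! j > u I})"
  have "part_cost xs k I (u I) (v I) = (n - s) + extra"
    unfolding part_cost_def Let_def extra_def length_xs samplesD(2)[OF I] ..
  moreover have "real extra < real (min k (n - k)) + 2 * slack"
  proof (cases "2 * k < n")
    case True
    then have "extra \<le> card {j. j < n \<and> xs ! j < v I}"
      by (auto simp: extra_def intro!: card_mono)
    then show ?thesis
      using card_less_pivot_v[OF I] \<open>I \<notin> partition_unrepresentative\<close> True
      by (simp add: partition_unrepresentative_def)
  next
    case False
    then have "extra \<le> card {j. j < n \<and> u I < xs ! j}"
      by (auto simp: extra_def intro!: card_mono)
    then show ?thesis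
      using card_greater_pivot_u[OF I] \<open>I \<notin> partition_unrepresentative\<close> False
      by (simp add: partition_unrepresentative_def)
  qed
  ultimately show ?thesis by simp
qed

lemma cost_bound_le:
  assumes I: "I \<in> samples n s" and "0 \<le> \<gamma>P"
  shows "cost_bound \<gamma>P xs k s g I
           \<le> typical_cost \<gamma>P + real n * indicator partition_unrepresentative I
             + \<gamma>P * real n * indicator unrepresentative I"
proof -
  have part: "real (part_cost xs k I (u I) (v I))
      \<le> real (n - s) + real (min k (n - k)) + 2 * slack + real n * indicator partition_unrepresentative I"
    using part_cost_less[OF I] part_cost_le_length[of xs k I "u I" "v I"] samplesD[OF I] slack_pos
    by (cases "I \<in> partition_unrepresentative") (auto simp: length_xs)
  have "real (hat_n xs k (u I) (v I)) \<le> 4 * slack + real n * indicator unrepresentative I"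
    using hat_n_less[OF I] hat_n_le_length[of xs k "u I" "v I"] slack_pos
    by (cases "I \<in> unrepresentative") (auto simp: length_xs)
  then have "\<gamma>P * real (hat_n xs k (u I) (v I)) \<le> \<gamma>P * (4 * slack + real n * indicator unrepresentative I)"
    using \<open>0 \<le> \<gamma>P\<close> by (rule mult_left_mono)
  then show ?thesis
    using part s unfolding cost_bound_def Let_def typical_cost_def by (simp add: of_nat_diff algebra_simps)
qed

lemma typical_cost_le:
  assumes "slack \<le> a * f" and "real s \<le> b * f" and "1 / 2 \<le> \<gamma>P"
  shows "typical_cost \<gamma>P \<le> real n + real (min k (n - k)) + ((4 * \<gamma>P + 2) * a + (2 * \<gamma>P - 1) * b) * f"
proof -
  have "(4 * \<gamma>P + 2) * slack \<le> (4 * \<gamma>P + 2) * (a * f)" "(2 * \<gamma>P - 1) * real s \<le> (2 * \<gamma>P - 1) * (b * f)"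
    using assms by (intro mult_left_mono; simp)+
  then show ?thesis
    unfolding typical_cost_def distrib_right mult.assoc by linarith
qed

lemma prob_undersampled:
  assumes "m \<le> n"
  shows "measure_pmf.prob sample_distr (undersampled m) \<le> failure_prob"
  using samples_lower_tail[of "lowest xs m" n s g] lowest_subset[of xs m] card_lowest[of m xs] assms s g
  by (simp add: undersampled_def failure_prob_def length_xs)

lemma prob_oversampled:
  assumes "m \<le> n"
  shows "measure_pmf.prob sample_distr (oversampled m) \<le> failure_prob"
  using samples_upper_tail[of "lowest xs m" n s g] lowest_subset[of xs m] card_lowest[of m xs] assms s g
  by (simp add: oversampled_def failure_prob_def length_xs)

lemma prob_unrepresentative: "measure_pmf.prob sample_distr unrepresentative \<le> 4 * failure_prob"
proof -
  have union_bound: "measure_pmf.prob sample_distr (A \<union> B)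
      \<le> measure_pmf.prob sample_distr A + measure_pmf.prob sample_distr B" for A B
    by (rule measure_Un_le) auto
  have "measure_pmf.prob sample_distr (undersampled k) \<le> failure_prob"
    "measure_pmf.prob sample_distr (oversampled (k - 1)) \<le> failure_prob"
    "measure_pmf.prob sample_distr (undersampled rank_above) \<le> failure_prob"
    "measure_pmf.prob sample_distr (oversampled rank_below) \<le> failure_prob"
    using prob_undersampled prob_oversampled k rank_above_le rank_below_le by auto
  then show ?thesis
    using union_bound[of "undersampled k \<union> oversampled (k - 1) \<union> undersampled rank_above"
        "oversampled rank_below"]
      union_bound[of "undersampled k \<union> oversampled (k - 1)" "undersampled rank_above"]
      union_bound[of "undersampled k" "oversampled (k - 1)"]
    unfolding unrepresentative_def by linarith
qed

lemma prob_partition_unrepresentative: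
  "measure_pmf.prob sample_distr partition_unrepresentative \<le> failure_prob"
  using prob_undersampled[OF rank_above_le] prob_oversampled rank_below_le k
  by (simp add: partition_unrepresentative_def)

lemma partition_unrepresentative_subset: "partition_unrepresentative \<subseteq> unrepresentative"
  by (auto simp: partition_unrepresentative_def unrepresentative_def)

lemma prob_cost_le:
  assumes "\<forall>I \<in> samples n s. c I \<le> cost_bound \<gamma>P xs k s g I" and "0 \<le> \<gamma>P"
    and "typical_cost \<gamma>P \<le> T"
  shows "1 - 4 * failure_prob \<le> measure_pmf.prob sample_distr {I. c I \<le> T}"
proof -
  have "c I \<le> T" if "I \<in> samples n s" "I \<notin> unrepresentative" for I
  proof -
    have "I \<notin> partition_unrepresentative"
      using that(2) partition_unrepresentative_subset by blast
    then show ?thesis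
      using order_trans[OF bspec[OF assms(1) that(1)] cost_bound_le[OF that(1) assms(2)]] that(2)
        assms(3)
      by simp
  qed
  then have "measure_pmf.prob sample_distr (UNIV - unrepresentative)
      \<le> measure_pmf.prob sample_distr {I. c I \<le> T}"
    using s by (intro measure_pmf.finite_measure_mono_AE) (auto simp: AE_measure_pmf_iff samples_nonempty)
  moreover have "measure_pmf.prob sample_distr (UNIV - unrepresentative)
      = 1 - measure_pmf.prob sample_distr unrepresentative"
    using measure_pmf.prob_compl[of unrepresentative sample_distr] by simp
  ultimately show ?thesis
    using prob_unrepresentative by linarith
qed

lemma expectation_cost_le:
  assumes "\<forall>I \<in> samples n s. c I \<le> cost_bound \<gamma>P xs k s g I" and "0 \<le> \<gamma>P"
  shows "measure_pmf.expectation sample_distr c \<le> typical_cost \<gamma>P + (1 + 4 * \<gamma>P) * real n * failure_prob"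
proof -
  have integrable: "integrable sample_distr f" for f :: "nat set \<Rightarrow> real"
    using s by (auto simp: samples_nonempty intro: integrable_measure_pmf_finite)
  have "measure_pmf.expectation sample_distr c
      \<le> measure_pmf.expectation sample_distr (\<lambda>I. typical_cost \<gamma>P
           + real n * indicator partition_unrepresentative I + \<gamma>P * real n * indicator unrepresentative I)"
    using order_trans[OF bspec[OF assms(1)] cost_bound_le[OF _ assms(2)]] s
    by (intro integral_mono_AE integrable) (auto simp: AE_measure_pmf_iff samples_nonempty)
  also have "\<dots> = typical_cost \<gamma>P + real n * measure_pmf.prob sample_distr partition_unrepresentative
      + \<gamma>P * real n * measure_pmf.prob sample_distr unrepresentative"
    by (simp add: integrable)
  also have "\<dots> \<le> typical_cost \<gamma>P + real n * failure_prob + \<gamma>P * real n * (4 * failure_prob)"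
    using prob_partition_unrepresentative prob_unrepresentative \<open>0 \<le> \<gamma>P\<close>
    by (intro add_mono mult_left_mono order_refl) auto
  finally show ?thesis by (simp add: algebra_simps)
qed

end

section \<open>Choice of the parameters\<close>

lemma sample_size_bounds:
  assumes "0 < \<alpha>" and "sample_size \<alpha> \<epsilon>s n < n - 1"
  shows "\<alpha> * real n powr \<epsilon>s \<le> real (sample_size \<alpha> \<epsilon>s n)"
    and "real (sample_size \<alpha> \<epsilon>s n) < \<alpha> * real n powr \<epsilon>s + 1"
    and "1 \<le> sample_size \<alpha> \<epsilon>s n"
proof -
  have "0 < \<alpha> * real n powr \<epsilon>s"
    using assms by simp
  moreover have "sample_size \<alpha> \<epsilon>s n = nat \<lceil>\<alpha> * real n powr \<epsilon>s\<rceil>"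
    using assms(2) unfolding sample_size_def by (simp add: min_def split: if_splits)
  ultimately show "\<alpha> * real n powr \<epsilon>s \<le> real (sample_size \<alpha> \<epsilon>s n)"
    "real (sample_size \<alpha> \<epsilon>s n) < \<alpha> * real n powr \<epsilon>s + 1" "1 \<le> sample_size \<alpha> \<epsilon>s n"
    by linarith+
qed

lemma gap_scaled_le_powr:
  assumes "0 < \<alpha>" "0 < \<beta>" "0 < s" "0 < n" and s: "\<alpha> * real n powr \<epsilon>s \<le> real s"
    and \<eta>: "1 + (\<epsilon> - \<epsilon>s) / 2 \<le> \<eta>"
  shows "gap \<beta> \<epsilon> s n * real n / real s \<le> sqrt (\<beta> / \<alpha>) * real n powr \<eta>"
proof -
  have "(gap \<beta> \<epsilon> s n)\<^sup>2 = \<beta> * real s * real n powr \<epsilon>"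
    using assms by (simp add: gap_def)
  then have "(gap \<beta> \<epsilon> s n * real n / real s)\<^sup>2 = \<beta> * (real n powr \<epsilon> * (real n)\<^sup>2) / real s"
    using assms by (simp add: power_divide power_mult_distrib power2_eq_square field_simps)
  also have "\<dots> \<le> \<beta> * (real n powr \<epsilon> * (real n)\<^sup>2) / (\<alpha> * real n powr \<epsilon>s)"
    using assms by (intro divide_left_mono) auto
  also have "\<dots> = \<beta> / \<alpha> * ((real n)\<^sup>2 * (real n powr \<epsilon> / real n powr \<epsilon>s))"
    by (simp add: field_simps)
  also have "(real n)\<^sup>2 * (real n powr \<epsilon> / real n powr \<epsilon>s) = (real n powr (1 + (\<epsilon> - \<epsilon>s) / 2))\<^sup>2"
  proof -
    have "(real n powr (1 + (\<epsilon> - \<epsilon>s) / 2))\<^sup>2 = real n powr (2 + (\<epsilon> - \<epsilon>s))"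
      by (simp add: power2_eq_square flip: powr_add)
    also have "\<dots> = real n powr 2 * (real n powr \<epsilon> / real n powr \<epsilon>s)"
      by (simp add: powr_add powr_diff)
    finally show ?thesis by simp
  qed
  also have "\<beta> / \<alpha> * (real n powr (1 + (\<epsilon> - \<epsilon>s) / 2))\<^sup>2
      = (sqrt (\<beta> / \<alpha>) * real n powr (1 + (\<epsilon> - \<epsilon>s) / 2))\<^sup>2"
    using assms by (simp add: power_mult_distrib)
  finally have "gap \<beta> \<epsilon> s n * real n / real s \<le> sqrt (\<beta> / \<alpha>) * real n powr (1 + (\<epsilon> - \<epsilon>s) / 2)"
    by (rule power2_le_imp_le) (use assms in simp)
  also have "\<dots> \<le> sqrt (\<beta> / \<alpha>) * real n powr \<eta>"
    using assms by (intro mult_left_mono powr_mono) simp_all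
  finally show ?thesis .
qed

lemma parameter_bounds:
  assumes "0 < \<alpha>" "0 < \<beta>" "sample_size \<alpha> \<epsilon>s n < n - 1"
    and "\<epsilon>s \<le> \<eta>" "1 + (\<epsilon> - \<epsilon>s) / 2 \<le> \<eta>"
  defines "s \<equiv> sample_size \<alpha> \<epsilon>s n" and "g \<equiv> gap \<beta> \<epsilon> (sample_size \<alpha> \<epsilon>s n) n"
  shows "0 < g" and "exp (- 2 * g\<^sup>2 / real s) = exp (- 2 * \<beta> * real n powr \<epsilon>)"
    and "g * real n / real s \<le> sqrt (\<beta> / \<alpha>) * real n powr \<eta>"
    and "real s \<le> (\<alpha> + 1 / real n powr \<eta>) * real n powr \<eta>"
proof -
  note s_bounds = sample_size_bounds[OF assms(1,3), folded s_def]
  have g_def': "g = gap \<beta> \<epsilon> s n" by (simp add: g_def s_def)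
  have "0 < n" using assms(3) by simp
  then show "0 < g" "exp (- 2 * g\<^sup>2 / real s) = exp (- 2 * \<beta> * real n powr \<epsilon>)"
    using \<open>0 < \<beta>\<close> s_bounds by (simp_all add: g_def' gap_def)
  show "g * real n / real s \<le> sqrt (\<beta> / \<alpha>) * real n powr \<eta>"
    unfolding g_def' using gap_scaled_le_powr assms s_bounds \<open>0 < n\<close> by simp
  have "\<alpha> * real n powr \<epsilon>s \<le> \<alpha> * real n powr \<eta>"
    using \<open>0 < n\<close> assms(1,4) by (intro mult_left_mono powr_mono) auto
  then show "real s \<le> (\<alpha> + 1 / real n powr \<eta>) * real n powr \<eta>"
    using s_bounds(2) \<open>0 < n\<close> by (simp add: distrib_right)
qed

lemma mult_le_powr_if_powr_mult_le_1:
  fixes x e \<eta> :: real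
  assumes "0 < x" and "x powr (1 - \<eta>) * e \<le> 1"
  shows "x * e \<le> x powr \<eta>"
proof -
  have "x powr \<eta> * x powr (1 - \<eta>) = x"
    using assms powr_add[of x \<eta> "1 - \<eta>"] by simp
  then have "x * e = x powr \<eta> * (x powr (1 - \<eta>) * e)"
    by (metis mult.assoc)
  also have "\<dots> \<le> x powr \<eta>"
    using assms by (simp add: mult_left_le)
  finally show ?thesis .
qed

theorem theorem5p1:
  fixes \<alpha> \<beta> \<gamma>P \<epsilon> \<epsilon>s :: real
    and xs :: "'a::linorder list" and n k :: nat
    and cnk :: "nat set \<Rightarrow> nat"
  assumes "\<alpha> > 0" and "\<beta> > 0" and "\<gamma>P > 2" and "0 < \<epsilon>" and "\<epsilon> < \<epsilon>s"
    and "max (1 + (\<epsilon> - \<epsilon>s) / 2) \<epsilon>s < 1"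
    and "length xs = n" and "1 \<le> k" and "k \<le> n"
    and "sample_size \<alpha> \<epsilon>s n < n - 1"
    and "\<forall>I \<in> samples n (sample_size \<alpha> \<epsilon>s n).
           real (cnk I) \<le> cost_bound \<gamma>P xs k (sample_size \<alpha> \<epsilon>s n)
                             (gap \<beta> \<epsilon> (sample_size \<alpha> \<epsilon>s n) n) I"
  shows "let \<eta> = max (1 + (\<epsilon> - \<epsilon>s) / 2) \<epsilon>s;
             f = real n powr \<eta>;
             \<gamma>hat = (4 * \<gamma>P + 2) * sqrt (\<beta> / \<alpha>) + (2 * \<gamma>P - 1) * (\<alpha> + 1 / f);
             D = pmf_of_set (samples n (sample_size \<alpha> \<epsilon>s n))
         in measure_pmf.prob D {I. real (cnk I) \<le> real n + real (min k (n - k)) + \<gamma>hat * f}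
              \<ge> 1 - 4 * exp (- 2 * \<beta> * real n powr \<epsilon>)
          \<and> (real n powr (1 - \<eta>) * exp (- 2 * \<beta> * real n powr \<epsilon>) \<le> 1 \<longrightarrow>
               measure_pmf.expectation D (\<lambda>I. real (cnk I))
                 \<le> real n + real (min k (n - k)) + (\<gamma>hat + 4 * \<gamma>P + 2) * f)"
proof -
  define s where "s = sample_size \<alpha> \<epsilon>s n"
  define g where "g = gap \<beta> \<epsilon> s n"
  define \<eta> where "\<eta> = max (1 + (\<epsilon> - \<epsilon>s) / 2) \<epsilon>s"
  define f where "f = real n powr \<eta>"
  define \<gamma>hat where "\<gamma>hat = (4 * \<gamma>P + 2) * sqrt (\<beta> / \<alpha>) + (2 * \<gamma>P - 1) * (\<alpha> + 1 / f)"
  have "\<epsilon>s \<le> \<eta>" "1 + (\<epsilon> - \<epsilon>s) / 2 \<le> \<eta>" by (simp_all add: \<eta>_def)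
  note params = parameter_bounds[OF assms(1,2,10) this, folded s_def, folded g_def f_def]
  interpret select_instance xs n k s g
    using assms sample_size_bounds(3)[OF assms(1,10)] params(1) by unfold_locales (auto simp: s_def)
  have cost: "\<forall>I \<in> samples n s. real (cnk I) \<le> cost_bound \<gamma>P xs k s g I"
    using assms(11) by (simp add: s_def g_def)
  have typical: "typical_cost \<gamma>P \<le> real n + real (min k (n - k)) + \<gamma>hat * f"
    using params(3,4) assms(3) unfolding \<gamma>hat_def by (intro typical_cost_le) (auto simp: slack_def)
  have "1 - 4 * exp (- 2 * \<beta> * real n powr \<epsilon>)
      \<le> measure_pmf.prob sample_distr {I. real (cnk I) \<le> real n + real (min k (n - k)) + \<gamma>hat * f}"
    using prob_cost_le[OF cost _ typical] assms(3) params(2) by (simp add: failure_prob_def)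
  moreover have "measure_pmf.expectation sample_distr (\<lambda>I. real (cnk I))
      \<le> real n + real (min k (n - k)) + (\<gamma>hat + 4 * \<gamma>P + 2) * f"
    if "real n powr (1 - \<eta>) * exp (- 2 * \<beta> * real n powr \<epsilon>) \<le> 1"
  proof -
    have "(1 + 4 * \<gamma>P) * (real n * failure_prob) \<le> (4 * \<gamma>P + 2) * f"
      using mult_le_powr_if_powr_mult_le_1[OF _ that] assms(3,10) params(2)
      by (intro mult_mono) (auto simp: failure_prob_def f_def)
    then show ?thesis
      using expectation_cost_le[OF cost] typical assms(3) by (simp add: algebra_simps)
  qed
  ultimately show ?thesis
    unfolding Let_def s_def \<eta>_def f_def \<gamma>hat_def by blast
qed

end
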